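(* Let $c>0$ and $C>0$ be constants, $\theta=c/n$, $p\le Cn\log n$, and let $X$ be an $n\times p$ Bernoulli–subgaussian random matrix with parameter $\theta$. Then the probability that $X$ has three distinct columns that are aligned is $o(1)$ as $n\to\infty$.
   Context: An $n\times p$ Bernoulli–subgaussian random matrix with parameter $\theta\in(0,1]$ is a matrix $X=(x_{ij})$ with iid entries $x_{ij}=\chi_{ij}\xi_{ij}$, where the $\chi_{ij}$ are iid indicator random variables with $\mathbb{P}(\chi_{ij}=1)=\theta$, the $\xi_{ij}$ are iid random variables independent of the $\chi$'s, with mean $0$, variance at most $1$, $\mathbb{E}|\xi_{ij}|\in[1/10,1]$, and $\mathbb{P}(|\xi_{ij}|\ge t)\le 2\exp(-t^2/2)$ for all $t>0$. A set of columns is called aligned if each of them has more than one nonzero entry and their nonzero entries occur in exactly the same positions (identical supports). *)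

theory Defs
  imports "HOL-Probability.Probability"
begin

definition subgaussian_law :: "real measure \<Rightarrow> bool" where
  "subgaussian_law \<mu> \<longleftrightarrow>
     prob_space \<mu> \<and> sets \<mu> = sets borel \<and>
     integrable \<mu> (\<lambda>x. x) \<and> (\<integral>x. x \<partial>\<mu>) = 0 \<and>
     integrable \<mu> (\<lambda>x. x\<^sup>2) \<and> (\<integral>x. (x - (\<integral>y. y \<partial>\<mu>))\<^sup>2 \<partial>\<mu>) \<le> 1 \<and>
     1/10 \<le> (\<integral>x. \<bar>x\<bar> \<partial>\<mu>) \<and> (\<integral>x. \<bar>x\<bar> \<partial>\<mu>) \<le> 1 \<and>
     (\<forall>t>0. measure \<mu> {x. \<bar>x\<bar> \<ge> t} \<le> 2 * exp (- t\<^sup>2 / 2))"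

definition bs_entry_law :: "real \<Rightarrow> real measure \<Rightarrow> real measure" where
  "bs_entry_law \<theta> \<mu> =
     distr (measure_pmf (bernoulli_pmf \<theta>) \<Otimes>\<^sub>M \<mu>) borel
       (\<lambda>(b, x). (if b then 1 else 0) * x)"

definition bs_matrix :: "nat \<Rightarrow> nat \<Rightarrow> real \<Rightarrow> real measure \<Rightarrow> (nat \<times> nat \<Rightarrow> real) measure" where
  "bs_matrix n p \<theta> \<mu> = PiM ({..<n} \<times> {..<p}) (\<lambda>_. bs_entry_law \<theta> \<mu>)"

definition col_support :: "nat \<Rightarrow> (nat \<times> nat \<Rightarrow> real) \<Rightarrow> nat \<Rightarrow> nat set" where
  "col_support n X j = {i. i < n \<and> X (i, j) \<noteq> 0}"

definition aligned_cols :: "nat \<Rightarrow> (nat \<times> nat \<Rightarrow> real) \<Rightarrow> nat set \<Rightarrow> bool" where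
  "aligned_cols n X J \<longleftrightarrow>
     (\<forall>j\<in>J. card (col_support n X j) > 1) \<and>
     (\<forall>j\<in>J. \<forall>k\<in>J. col_support n X j = col_support n X k)"

definition three_aligned :: "nat \<Rightarrow> nat \<Rightarrow> (nat \<times> nat \<Rightarrow> real) \<Rightarrow> bool" where
  "three_aligned n p X \<longleftrightarrow>
     (\<exists>j1 j2 j3. j1 < p \<and> j2 < p \<and> j3 < p \<and> j1 \<noteq> j2 \<and> j1 \<noteq> j3 \<and> j2 \<noteq> j3 \<and>
        aligned_cols n X {j1, j2, j3})"

end

theory Submission imports Defs "HOL-Real_Asymp.Real_Asymp" begin

text \<open>Three aligned columns j1, j2, j3 share two rows i \<noteq> i' of their common support, so the
six entries in rows {i, i'} and columns {j1, j2, j3} are nonzero. Each entry is nonzero with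
probability at most \<theta> independently, and there are at most p^3 n^2 such row/column choices;
the union bound gives p^3 n^2 \<theta>^6 \<le> C^3 c^6 (ln n)^3 / n \<longrightarrow> 0 for \<theta> = c/n and p \<le> C n ln n.\<close>

lemma sets_PiM_Collect_all:
  assumes "J \<subseteq> I" "finite J" "\<And>i. i \<in> J \<Longrightarrow> X i \<in> sets (M i)"
  shows "{x \<in> space (Pi\<^sub>M I M). \<forall>i\<in>J. x i \<in> X i} \<in> sets (Pi\<^sub>M I M)"
  using assms by (cases "J = {}") (auto intro!: sets.sets_Collect_finite_All')

lemma (in product_prob_space) measure_PiM_Collect:
  assumes "J \<subseteq> I" "finite J" "\<And>i. i \<in> J \<Longrightarrow> X i \<in> sets (M i)"
  shows "measure (Pi\<^sub>M I M) {x \<in> space (Pi\<^sub>M I M). \<forall>i\<in>J. x i \<in> X i} = (\<Prod>i\<in>J. measure (M i) (X i))"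
proof -
  have "{x \<in> space (Pi\<^sub>M I M). \<forall>i\<in>J. x i \<in> X i} = prod_emb I M J (Pi\<^sub>E J X)"
    unfolding prod_emb_def using assms by (auto simp: space_PiM Pi_iff)
  with measure_PiM_emb[OF assms] show ?thesis by simp
qed

lemma sets_bs_entry_law [simp]: "sets (bs_entry_law \<theta> \<mu>) = sets borel"
  by (simp add: bs_entry_law_def)

lemma
  assumes "subgaussian_law \<mu>" and "0 \<le> \<theta>" "\<theta> \<le> 1"
  shows prob_space_bs_entry_law: "prob_space (bs_entry_law \<theta> \<mu>)"
    and measure_bs_entry_law_nonzero_le: "measure (bs_entry_law \<theta> \<mu>) {y. y \<noteq> 0} \<le> \<theta>"
proof -
  define B where "B = measure_pmf (bernoulli_pmf \<theta>)"
  define f where "f = (\<lambda>(b, x). (if b then 1 else 0) * x :: real)"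
  interpret m: prob_space \<mu> using assms(1) by (simp add: subgaussian_law_def)
  interpret pp: pair_prob_space B \<mu>
    by (simp add: B_def pair_prob_space_def pair_sigma_finite_def prob_space_measure_pmf
        m.prob_space_axioms prob_space_imp_sigma_finite)
  have sets_\<mu>: "sets \<mu> = sets borel" using assms(1) by (simp add: subgaussian_law_def)
  have f_meas: "f \<in> borel_measurable (B \<Otimes>\<^sub>M \<mu>)"
    unfolding f_def B_def using sets_\<mu> by measurable
  have law: "bs_entry_law \<theta> \<mu> = distr (B \<Otimes>\<^sub>M \<mu>) borel f"
    by (simp add: bs_entry_law_def B_def f_def)
  show "prob_space (bs_entry_law \<theta> \<mu>)"
    unfolding law by (rule pp.prob_space_distr[OF f_meas])
  have "measure (bs_entry_law \<theta> \<mu>) {y. y \<noteq> 0} = measure (B \<Otimes>\<^sub>M \<mu>) (f -` {y. y \<noteq> 0} \<inter> space (B \<Otimes>\<^sub>M \<mu>))"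
    unfolding law by (rule measure_distr[OF f_meas]) auto
  also have "\<dots> \<le> measure (B \<Otimes>\<^sub>M \<mu>) ({True} \<times> space \<mu>)"
    by (rule pp.P.finite_measure_mono)
      (auto simp: B_def f_def space_pair_measure split: if_splits intro!: pair_measureI)
  also have "\<dots> = measure B {True} * measure \<mu> (space \<mu>)"
    using m.emeasure_pair_measure_Times[of "{True}" B "space \<mu>"]
    by (simp add: B_def[symmetric] pp.emeasure_eq_measure pp.M1.emeasure_eq_measure
        m.emeasure_eq_measure ennreal_mult''[symmetric]) (simp add: B_def)
  also have "\<dots> = \<theta>" using assms(2,3) by (simp add: B_def measure_pmf_single m.prob_space)
  finally show "measure (bs_entry_law \<theta> \<mu>) {y. y \<noteq> 0} \<le> \<theta>" .
qed

lemma three_alignedE: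
  assumes "three_aligned n p X"
  obtains j1 j2 j3 i i' where "j1 < p" "j2 < p" "j3 < p" "j1 \<noteq> j2" "j1 \<noteq> j3" "j2 \<noteq> j3"
    and "i < n" "i' < n" "i \<noteq> i'"
    and "\<forall>e\<in>{i, i'} \<times> {j1, j2, j3}. X e \<noteq> 0"
proof -
  obtain j1 j2 j3 where j: "j1 < p" "j2 < p" "j3 < p" "j1 \<noteq> j2" "j1 \<noteq> j3" "j2 \<noteq> j3"
    and aligned: "aligned_cols n X {j1, j2, j3}"
    using assms unfolding three_aligned_def by blast
  let ?S = "col_support n X j1"
  have "card ?S > 1" and same: "col_support n X j2 = ?S" "col_support n X j3 = ?S"
    using aligned unfolding aligned_cols_def by blast+
  then obtain i i' where "i \<in> ?S" "i' \<in> ?S" "i \<noteq> i'"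
    by (metis One_nat_def card.infinite card_le_Suc0_iff_eq not_less not_less_zero)
  with same show thesis
    by (intro that[OF j, of i i']) (auto simp: col_support_def)
qed

lemma prob_three_aligned_le:
  assumes "subgaussian_law \<mu>" and "0 \<le> \<theta>" "\<theta> \<le> 1"
  shows "measure (bs_matrix n p \<theta> \<mu>) {X \<in> space (bs_matrix n p \<theta> \<mu>). three_aligned n p X}
         \<le> real p ^ 3 * real n ^ 2 * \<theta> ^ 6"
proof -
  define E where "E = bs_entry_law \<theta> \<mu>"
  define I where "I = {..<n} \<times> {..<p}"
  define M where "M = bs_matrix n p \<theta> \<mu>"
  have M_eq: "M = Pi\<^sub>M I (\<lambda>_. E)" unfolding M_def I_def E_def bs_matrix_def by simp
  interpret E: prob_space E unfolding E_def by (rule prob_space_bs_entry_law[OF assms])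
  interpret P: product_prob_space "\<lambda>_. E" I by unfold_locales
  have nonzero_sets: "{y::real. y \<noteq> 0} \<in> sets E" by (simp add: E_def)
  define K where "K = (\<lambda>(j1, j2, j3, i, i'). {i, i'} \<times> {j1, j2, j3} :: (nat \<times> nat) set)"
  define T where "T = {(j1, j2, j3, i, i'). j1 < p \<and> j2 < p \<and> j3 < p \<and> i < n \<and> i' < n \<and>
                        j1 \<noteq> j2 \<and> j1 \<noteq> j3 \<and> j2 \<noteq> j3 \<and> i \<noteq> i'}"
  define A where "A = (\<lambda>t. {X \<in> space M. \<forall>e\<in>K t. X e \<in> {y. y \<noteq> 0}})"
  have T_sub: "T \<subseteq> {..<p} \<times> {..<p} \<times> {..<p} \<times> {..<n} \<times> {..<n}" unfolding T_def by auto
  then have "finite T" by (rule finite_subset) simp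
  have "card T \<le> p ^ 3 * n ^ 2"
    using card_mono[OF _ T_sub] by (simp add: card_cartesian_product power3_eq_cube power2_eq_square)
  then have card_T: "real (card T) \<le> real p ^ 3 * real n ^ 2"
    by (metis of_nat_le_iff of_nat_mult of_nat_power)
  have K: "K t \<subseteq> I" "finite (K t)" "card (K t) = 6" if "t \<in> T" for t
    using that unfolding K_def T_def I_def by (auto simp: card_cartesian_product)
  have A_sets: "A t \<in> sets M" if "t \<in> T" for t
    unfolding A_def M_eq using K[OF that] nonzero_sets by (intro sets_PiM_Collect_all) auto
  have prob_A: "measure M (A t) \<le> \<theta> ^ 6" if "t \<in> T" for t
  proof -
    have "measure M (A t) = measure E {y. y \<noteq> 0} ^ 6"
      unfolding A_def M_eq
      using K[OF that] nonzero_sets P.measure_PiM_Collect[of "K t" "\<lambda>_. {y. y \<noteq> 0}"] by simp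
    also have "\<dots> \<le> \<theta> ^ 6"
      using measure_bs_entry_law_nonzero_le[OF assms] by (simp add: E_def power_mono)
    finally show ?thesis .
  qed
  have "{X \<in> space M. three_aligned n p X} \<subseteq> (\<Union>t\<in>T. A t)"
  proof safe
    fix X assume "X \<in> space M" "three_aligned n p X"
    then obtain j1 j2 j3 i i' where "(j1, j2, j3, i, i') \<in> T" "X \<in> A (j1, j2, j3, i, i')"
      by (elim three_alignedE) (auto simp: A_def K_def T_def)
    then show "X \<in> (\<Union>t\<in>T. A t)" by blast
  qed
  then have "measure M {X \<in> space M. three_aligned n p X} \<le> measure M (\<Union>t\<in>T. A t)"
    using \<open>finite T\<close> A_sets by (intro P.P.finite_measure_mono[unfolded M_eq[symmetric]]) auto
  also have "\<dots> \<le> (\<Sum>t\<in>T. measure M (A t))"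
    using \<open>finite T\<close> A_sets by (intro P.P.finite_measure_subadditive_finite[unfolded M_eq[symmetric]]) auto
  also have "\<dots> \<le> real (card T) * \<theta> ^ 6"
    using sum_mono[OF prob_A] by simp
  also have "\<dots> \<le> real p ^ 3 * real n ^ 2 * \<theta> ^ 6"
    using card_T assms(2) by (simp add: mult_right_mono)
  finally show ?thesis unfolding M_def .
qed

theorem mainTheorem10:
  fixes c C :: real and p :: "nat \<Rightarrow> nat" and \<mu> :: "nat \<Rightarrow> real measure"
  assumes "c > 0" and "C > 0"
    and "\<forall>\<^sub>F n in sequentially. real (p n) \<le> C * real n * ln (real n)"
    and "\<And>n. subgaussian_law (\<mu> n)"
  shows "(\<lambda>n. measure (bs_matrix n (p n) (c / real n) (\<mu> n))
                {X \<in> space (bs_matrix n (p n) (c / real n) (\<mu> n)). three_aligned n (p n) X})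
         \<longlonglongrightarrow> 0"
proof (rule tendsto_sandwich[OF _ _ tendsto_const])
  have "(\<lambda>n. ln (real n) ^ 3 / real n) \<longlonglongrightarrow> 0" by real_asymp
  then show "(\<lambda>n. C ^ 3 * c ^ 6 * (ln (real n) ^ 3 / real n)) \<longlonglongrightarrow> 0"
    by (rule tendsto_mult_right_zero)
  show "\<forall>\<^sub>F n in sequentially. 0 \<le> measure (bs_matrix n (p n) (c / real n) (\<mu> n))
          {X \<in> space (bs_matrix n (p n) (c / real n) (\<mu> n)). three_aligned n (p n) X}"
    by simp
  have "\<forall>\<^sub>F n in sequentially. c \<le> real n \<and> 1 \<le> real n"
    by (intro eventually_conj) real_asymp+
  with assms(3) show "\<forall>\<^sub>F n in sequentially. measure (bs_matrix n (p n) (c / real n) (\<mu> n))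
          {X \<in> space (bs_matrix n (p n) (c / real n) (\<mu> n)). three_aligned n (p n) X}
        \<le> C ^ 3 * c ^ 6 * (ln (real n) ^ 3 / real n)"
  proof eventually_elim
    case (elim n)
    then have \<theta>: "0 \<le> c / real n" "c / real n \<le> 1" using assms(1) by auto
    note prob_three_aligned_le[OF assms(4) \<theta>]
    also have "real (p n) ^ 3 * real n ^ 2 * (c / real n) ^ 6
        \<le> (C * real n * ln (real n)) ^ 3 * real n ^ 2 * (c / real n) ^ 6"
      using elim \<theta> by (intro mult_right_mono power_mono) auto
    also have "\<dots> = C ^ 3 * c ^ 6 * (ln (real n) ^ 3 / real n)"
      using elim by (simp add: field_simps power2_eq_square eval_nat_numeral)
    finally show ?case .
  qed
qed

end
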